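(* Assume that for every $w\in\mathcal W$ the loss $\ell(w,Z)$, $Z\sim P_Z$, is $\sigma$-sub-Gaussian, and that for every $z\in\mathcal Z$ the map $w\mapsto \ell(w,z)$ is $K$-Lipschitz with respect to $d_{\mathcal W}$. Fix any data-independent probability distribution $Q_{W'W}$ on $\mathcal W\times\mathcal W$, any $k>0$ and any $\epsilon\in(0,1)$. Then with probability at least $1-\epsilon$ over $S\sim P_Z^{n}$, $$\Delta\le \frac{k\sigma^2}{2n}+\frac{D(P_{W'W|S}\,\|\,Q_{W'W})-\log\epsilon}{k}+\frac1k\log \mathbb E_{(W',W)\sim Q_{W'W}}\Big[e^{kK\,d_{\mathcal W}(W',W)}\Big].$$
   Context: Setting. Let $\mathcal Z=\mathcal X\times\mathcal Y$ be an instance space with data distribution $P_Z$, and let $S=(Z_1,\dots,Z_n)\sim P_Z^{n}$ be a training set of $n$ i.i.d. samples. An augmented network has $L+1$ layers with weights $W=(W^{(1)},\dots,W^{(L+1)})\in\mathcal W=\mathcal W^{(1)}\times\cdots\times\mathcal W^{(L+1)}$. A distinguished index $l_0$ is the channel layer: $\mathcal W^{(l_0)}=\mathbb R^{d\times d}\times\mathbb R^{d}$, with weights $W^{(l_0)}=(M^{(l_0)},B^{(l_0)})$ acting on a feature $f\in\mathbb R^d$ by $f\mapsto M^{(l_0)}f+B^{(l_0)}$. The other weights $\tilde W=(W^{(l)})_{l\ne l_0}\in\tilde{\mathcal W}=\prod_{l\neq l_0}\mathcal W^{(l)}$ are the learnable weights. A learning algorithm is a Markov kernel $P_{\tilde W|S}$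 from $\mathcal Z^n$ to $\tilde{\mathcal W}$; the channel-free training distribution on $\mathcal W$ is $P_{W|S}=P_{\tilde W|S}\otimes\delta_{(\mathbf I_d,\mathbf 0)}$ (channel layer fixed to identity matrix and zero bias). A channel is a Markov kernel $P_{W'^{(l_0)}|W^{(l_0)}}$ on $\mathcal W^{(l_0)}$; the deployment kernel $P_{W'|W}$ sets $W'^{(l)}=W^{(l)}$ for all $l\ne l_0$ and draws $W'^{(l_0)}\sim P_{W'^{(l_0)}|W^{(l_0)}}(\cdot\,|\,W^{(l_0)})$ independently of everything else. The joint distribution on $\mathcal W\times\mathcal W$ is $P_{W'W|S}(W',W|S)=P_{W'|W}(W'|W)P_{W|S}(W|S)$, and $P_{W'|S}$ denotes its marginal in $W'$. For a loss $\ell:\mathcal W\times\mathcal Z\to[0,\infty)$ let $L(w)=\mathbb E_{Z\sim P_Z}[\ell(w,Z)]$ and $\hat L(w,S)=\frac1n\sum_{i=1}^n\ell(w,Z_i)$; for a distribution $P$ on $\mathcal W$, $L(P)=\int L(w)P(dw)$ and $\hat L_S(P)=\int\hat L(w,S)P(dw)$. The wireless generalization error is $\Delta=L(P_{W'|S})-\hat L_S(P_{W|S})$. The metric on $\mathcal W$ is $d_{\mathcal W}(W',W)=\sum_{l=1}^{L+1}d^{(l)}(W'^{(l)},W^{(l)})$ where each $d^{(l)}$ is a metric on $\mathcal W^{(l)}$. "$\sigma$-sub-Gaussian" means $\log\mathbb E[e^{\lambda(\ell(w,Z)-L(w))}]\le\lambda^2\sigma^2/2$ for all $\lambda\in\mathbb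 R$; "$K$-Lipschitz" means $|\ell(w,z)-\ell(w',z)|\le K\,d_{\mathcal W}(w,w')$. "Data-independent" means not depending on $S$. $D(\cdot\|\cdot)$ is the Kullback–Leibler divergence (natural logarithm). *)

theory Defs
  imports "HOL-Probability.Probability"
begin

text \<open>sigma-sub-Gaussian random variable X under probability measure M:
  X integrable and log E[exp(lambda (X - E X))] <= lambda^2 sigma^2 / 2 for all real lambda,
  written (equivalently, without logarithm) as E[exp(lambda (X - E X))] <= exp(lambda^2 sigma^2/2),
  the expectation of the nonnegative function being taken in ennreal so it is always defined.\<close>
definition sub_gaussian :: "'a measure \<Rightarrow> ('a \<Rightarrow> real) \<Rightarrow> real \<Rightarrow> bool" where
  "sub_gaussian M X \<sigma> \<longleftrightarrow> integrable M X \<and>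
     (\<forall>t::real. (\<integral>\<^sup>+ x. ennreal (exp (t * (X x - (\<integral>y. X y \<partial>M)))) \<partial>M)
                  \<le> ennreal (exp (t\<^sup>2 * \<sigma>\<^sup>2 / 2)))"

definition KL :: "'a measure \<Rightarrow> 'a measure \<Rightarrow> ereal" where
  "KL P Q = (if absolutely_continuous Q P \<and> integrable P (entropy_density (exp 1) Q P)
             then ereal (KL_divergence (exp 1) Q P) else \<infinity>)"

definition eln :: "ennreal \<Rightarrow> ereal" where
  "eln x = (if x = \<top> then \<infinity> else if x = 0 then -\<infinity> else ereal (ln (enn2real x)))"

text \<open>Layers are indexed 1..L+1, with channel layer l0.  The weights of a layer l ~= l0 live in
  the measurable space Ml l (carrier inside a common universe type 'v); the learnable weights are
  the (extensional) tuples in PiM of those spaces.  The channel layer weights are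
  (M, B) :: real^'d^'d \<times> (real^'d).\<close>

definition learn_idx :: "nat \<Rightarrow> nat \<Rightarrow> nat set" where
  "learn_idx L l0 = {1..Suc L} - {l0}"

definition learn_space :: "nat \<Rightarrow> nat \<Rightarrow> (nat \<Rightarrow> 'v measure) \<Rightarrow> (nat \<Rightarrow> 'v) measure" where
  "learn_space L l0 Ml = PiM (learn_idx L l0) Ml"

type_synonym ('v, 'd) weights = "(nat \<Rightarrow> 'v) \<times> ((real^'d^'d) \<times> (real^'d))"

definition weight_space ::
  "nat \<Rightarrow> nat \<Rightarrow> (nat \<Rightarrow> 'v measure) \<Rightarrow> ('v, 'd::finite) weights measure" where
  "weight_space L l0 Ml = learn_space L l0 Ml \<Otimes>\<^sub>M (borel :: ((real^'d^'d) \<times> (real^'d)) measure)"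

definition dW :: "nat \<Rightarrow> nat \<Rightarrow> (nat \<Rightarrow> 'v \<Rightarrow> 'v \<Rightarrow> real)
    \<Rightarrow> ((real^'d^'d) \<times> (real^'d) \<Rightarrow> (real^'d^'d) \<times> (real^'d) \<Rightarrow> real)
    \<Rightarrow> ('v, 'd::finite) weights \<Rightarrow> ('v, 'd) weights \<Rightarrow> real" where
  "dW L l0 dl dc W' W = (\<Sum>l\<in>learn_idx L l0. dl l (fst W' l) (fst W l)) + dc (snd W') (snd W)"

text \<open>Channel-free training distribution P_{W|S} = P_{W~|S} \<otimes> delta_{(I_d, 0)}.\<close>
definition train_dist ::
  "nat \<Rightarrow> nat \<Rightarrow> (nat \<Rightarrow> 'v measure) \<Rightarrow> (nat \<Rightarrow> 'v) measure \<Rightarrow> ('v, 'd::finite) weights measure" where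
  "train_dist L l0 Ml A = distr A (weight_space L l0 Ml) (\<lambda>f. (f, (mat 1, 0)))"

text \<open>Deployment kernel P_{W'|W}: learnable weights copied, channel layer resampled by the channel.\<close>
definition deploy ::
  "nat \<Rightarrow> nat \<Rightarrow> (nat \<Rightarrow> 'v measure) \<Rightarrow> ((real^'d^'d) \<times> (real^'d) \<Rightarrow> ((real^'d^'d) \<times> (real^'d)) measure)
    \<Rightarrow> ('v, 'd::finite) weights \<Rightarrow> ('v, 'd) weights measure" where
  "deploy L l0 Ml ch W = distr (ch (snd W)) (weight_space L l0 Ml) (\<lambda>c'. (fst W, c'))"

text \<open>Joint distribution P_{W'W|S}(W', W) = P_{W'|W}(W'|W) P_{W|S}(W|S), first component W'.\<close>
definition joint_dist ::
  "nat \<Rightarrow> nat \<Rightarrow> (nat \<Rightarrow> 'v measure) \<Rightarrow> ((real^'d^'d) \<times> (real^'d) \<Rightarrow> ((real^'d^'d) \<times> (real^'d)) measure)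
    \<Rightarrow> (nat \<Rightarrow> 'v) measure \<Rightarrow> (('v, 'd::finite) weights \<times> ('v, 'd) weights) measure" where
  "joint_dist L l0 Ml ch A =
     train_dist L l0 Ml A \<bind> (\<lambda>W. distr (deploy L l0 Ml ch W)
        (weight_space L l0 Ml \<Otimes>\<^sub>M weight_space L l0 Ml) (\<lambda>W'. (W', W)))"

definition deploy_dist ::
  "nat \<Rightarrow> nat \<Rightarrow> (nat \<Rightarrow> 'v measure) \<Rightarrow> ((real^'d^'d) \<times> (real^'d) \<Rightarrow> ((real^'d^'d) \<times> (real^'d)) measure)
    \<Rightarrow> (nat \<Rightarrow> 'v) measure \<Rightarrow> ('v, 'd::finite) weights measure" where
  "deploy_dist L l0 Ml ch A = distr (joint_dist L l0 Ml ch A) (weight_space L l0 Ml) fst"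

definition pop_risk :: "('w \<Rightarrow> 'z \<Rightarrow> real) \<Rightarrow> 'z measure \<Rightarrow> 'w \<Rightarrow> real" where
  "pop_risk loss PZ w = (\<integral>z. loss w z \<partial>PZ)"

definition emp_risk :: "('w \<Rightarrow> 'z \<Rightarrow> real) \<Rightarrow> nat \<Rightarrow> 'w \<Rightarrow> (nat \<Rightarrow> 'z) \<Rightarrow> real" where
  "emp_risk loss n w S = (\<Sum>i<n. loss w (S i)) / real n"

definition wireless_gen_error ::
  "('w \<Rightarrow> 'z \<Rightarrow> real) \<Rightarrow> 'z measure \<Rightarrow> nat \<Rightarrow> 'w measure \<Rightarrow> 'w measure \<Rightarrow> (nat \<Rightarrow> 'z) \<Rightarrow> real" where
  "wireless_gen_error loss PZ n PW' PW S =
     (\<integral>w. pop_risk loss PZ w \<partial>PW') - (\<integral>w. emp_risk loss n w S \<partial>PW)"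

end

theory Submission
  imports Defs
begin

(* By the Donsker-Varadhan variational formula, for every training set S
     k Delta - D(P_{W'W|S} || Q) <= log E_Q [exp (k (L(W') - Lhat(W, S)))].
   Since Q does not depend on S, Markov's inequality bounds the expectation inside the logarithm,
   outside an event of probability epsilon, by 1/epsilon times its mean over S, and Fubini lets us
   take that mean inside E_Q.  The Lipschitz property trades Lhat(W, S) for Lhat(W', S) at the cost of the
   factor exp (k K d(W', W)), and for fixed W' the n i.i.d. sub-Gaussian losses give
   E_S exp (k (L(W') - Lhat(W', S))) <= exp (k^2 sigma^2 / (2 n)). *)

lemma (in prob_space) exp_integral_le_nn_integral_exp:
  assumes g: "integrable M g"
  shows "ennreal (exp (expectation g)) \<le> (\<integral>\<^sup>+x. ennreal (exp (g x)) \<partial>M)"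
proof -
  define a where "a = expectation g"
  define h where "h x = exp a * (1 + (g x - a))" for x
  have h: "integrable M h" unfolding h_def using g by auto
  have "exp a = expectation h"
    unfolding h_def using g by (simp add: a_def prob_space algebra_simps)
  also have "\<dots> \<le> expectation (\<lambda>x. max 0 (h x))"
    by (rule integral_mono) (use h in auto)
  finally have "ennreal (exp a) \<le> ennreal (expectation (\<lambda>x. max 0 (h x)))" by simp
  also have "\<dots> = (\<integral>\<^sup>+x. ennreal (max 0 (h x)) \<partial>M)"
    by (rule nn_integral_eq_integral[symmetric]) (use h in auto)
  also have "\<dots> \<le> (\<integral>\<^sup>+x. ennreal (exp (g x)) \<partial>M)"
  proof (rule nn_integral_mono)
    fix x
    \<comment> \<open>h is the tangent line of exp at the mean a\<close>
    have "h x \<le> exp a * exp (g x - a)"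
      unfolding h_def by (intro mult_left_mono exp_ge_add_one_self) simp
    then show "ennreal (max 0 (h x)) \<le> ennreal (exp (g x))"
      by (intro ennreal_leI) (simp add: exp_diff)
  qed
  finally show ?thesis unfolding a_def .
qed

lemma (in prob_space) nn_integral_exp_neq_0:
  assumes "g \<in> borel_measurable M"
  shows "(\<integral>\<^sup>+x. ennreal (exp (g x)) \<partial>M) \<noteq> 0"
  using assms by (subst nn_integral_0_iff_AE) (auto simp: AE_False)

lemma donsker_varadhan:
  fixes P Q :: "'a measure" and f :: "'a \<Rightarrow> real"
  assumes P: "prob_space P" and Q: "prob_space Q" and sets_eq: "sets P = sets Q"
    and KL: "KL P Q = ereal D"
    and f[measurable]: "f \<in> borel_measurable Q" and f_int: "integrable P f"
  shows "ennreal (exp (integral\<^sup>L P f - D)) \<le> (\<integral>\<^sup>+x. ennreal (exp (f x)) \<partial>Q)"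
proof -
  interpret P: prob_space P by fact
  interpret Q: prob_space Q by fact
  have ac: "absolutely_continuous Q P" and dens_int: "integrable P (entropy_density (exp 1) Q P)"
    and D: "D = KL_divergence (exp 1) Q P"
    using KL by (auto simp: KL_def split: if_splits)
  define R where "R = RN_deriv Q P"
  have [measurable]: "R \<in> borel_measurable Q" unfolding R_def by simp
  have P_eq: "P = density Q R"
    unfolding R_def using Q.density_RN_deriv[OF ac sets_eq] by simp
  have R_fin: "AE x in Q. R x \<noteq> \<infinity>" unfolding R_def
    by (rule Q.RN_deriv_finite[OF _ ac sets_eq]) (simp add: P.sigma_finite_measure)
  have dens: "entropy_density (exp 1) Q P = (\<lambda>x. ln (enn2real (R x)))"
    unfolding entropy_density_def R_def by (auto simp: log_ln[symmetric])
  \<comment> \<open>E_P g = E_P f - D, and R e^g = e^f wherever 0 < R < \<infinity>\<close>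
  define g where "g x = f x - ln (enn2real (R x))" for x
  have "integral\<^sup>L P g = integral\<^sup>L P f - D"
    unfolding g_def D KL_divergence_def
    using Bochner_Integration.integral_diff[OF f_int dens_int] by (simp add: dens)
  then have "ennreal (exp (integral\<^sup>L P f - D)) \<le> (\<integral>\<^sup>+x. ennreal (exp (g x)) \<partial>P)"
    using P.exp_integral_le_nn_integral_exp[of g] f_int dens_int dens
    unfolding g_def by auto
  also have "\<dots> = (\<integral>\<^sup>+x. R x * ennreal (exp (g x)) \<partial>Q)"
    unfolding P_eq g_def by (simp add: nn_integral_density)
  also have "\<dots> \<le> (\<integral>\<^sup>+x. ennreal (exp (f x)) \<partial>Q)"
  proof (rule nn_integral_mono_AE)
    show "AE x in Q. R x * ennreal (exp (g x)) \<le> ennreal (exp (f x))"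
      using R_fin
    proof eventually_elim
      case (elim x)
      show ?case
      proof (cases "R x = 0")
        case False
        then have pos: "enn2real (R x) > 0"
          using elim by (simp add: enn2real_positive_iff less_top zero_less_iff_neq_zero)
        have "R x * ennreal (exp (g x)) = ennreal (enn2real (R x) * exp (g x))"
          using elim by (simp add: ennreal_mult'' ennreal_enn2real_if)
        also have "enn2real (R x) * exp (g x) = exp (f x)"
          unfolding g_def using pos by (simp add: exp_diff)
        finally show ?thesis by simp
      qed simp
    qed
  qed
  finally show ?thesis .
qed

lemma (in prob_space) nn_integral_Markov_high_probability:
  assumes f[measurable]: "f \<in> borel_measurable M"
    and bound: "(\<integral>\<^sup>+x. f x \<partial>M) \<le> c" and c: "c \<noteq> 0" and \<epsilon>: "0 < \<epsilon>"
  shows "\<exists>E\<in>sets M. 1 - \<epsilon> \<le> prob E \<and> (\<forall>x\<in>E. f x \<le> c / ennreal \<epsilon>)"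
proof (cases "c = \<top>")
  case True
  with \<epsilon> show ?thesis by (intro bexI[of _ "space M"]) (auto simp: prob_space ennreal_top_divide)
next
  case False
  define B where "B = enn2real c / \<epsilon>"
  have "enn2real c > 0"
    using False c by (simp add: enn2real_positive_iff less_top zero_less_iff_neq_zero)
  then have c_eq: "c = ennreal (B * \<epsilon>)" and B: "B > 0"
    using False \<epsilon> by (auto simp: B_def ennreal_enn2real_if)
  have cB: "c / ennreal \<epsilon> = ennreal B"
    using \<epsilon> B by (simp add: c_eq divide_ennreal)
  define X where "X = {x \<in> space M. ennreal B < f x}"
  have X[measurable]: "X \<in> sets M" unfolding X_def by measurable
  have "ennreal (B * prob X) = (\<integral>\<^sup>+x. ennreal B * indicator X x \<partial>M)"
    using B by (simp add: nn_integral_cmult_indicator emeasure_eq_measure ennreal_mult'')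
  also have "\<dots> \<le> (\<integral>\<^sup>+x. f x \<partial>M)"
    by (rule nn_integral_mono) (auto simp: X_def indicator_def less_imp_le)
  also have "\<dots> \<le> ennreal (B * \<epsilon>)" using bound c_eq by simp
  finally have "prob X \<le> \<epsilon>" using B \<epsilon> by (simp add: ennreal_le_iff)
  then show ?thesis using prob_compl[OF X] cB
    by (intro bexI[of _ "space M - X"]) (auto simp: X_def not_less)
qed

lemma ereal_le_of_exp_bound:
  fixes x a k \<epsilon> :: real and KLe :: ereal and C :: ennreal
  assumes k: "0 < k" and \<epsilon>: "0 < \<epsilon>" and KLe: "KLe \<noteq> -\<infinity>"
    and bound: "\<And>D. KLe = ereal D \<Longrightarrow> ennreal (exp (k * x - D)) \<le> ennreal (exp (k * a)) * C / ennreal \<epsilon>"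
  shows "ereal x \<le> ereal a + (KLe - ereal (ln \<epsilon>)) / ereal k + eln C / ereal k"
proof (cases KLe)
  case (real D)
  show ?thesis
  proof (cases "C = \<top>")
    case False
    define c where "c = enn2real C"
    have C_eq: "C = ennreal c" and "0 \<le> c"
      using False by (simp_all add: c_def ennreal_enn2real_if)
    then have "ennreal (exp (k * a)) * C / ennreal \<epsilon> = ennreal (exp (k * a) * c / \<epsilon>)"
      using \<epsilon> by (simp add: divide_ennreal ennreal_mult[symmetric])
    then have "ennreal (exp (k * x - D)) \<le> ennreal (exp (k * a) * c / \<epsilon>)"
      using bound[OF real] by simp
    then have le: "exp (k * x - D) \<le> exp (k * a) * c / \<epsilon>"
      using \<epsilon> by (subst (asm) ennreal_le_iff) (auto simp: c_def)
    then have "0 < exp (k * a) * c / \<epsilon>" by (rule less_le_trans[OF exp_gt_zero])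
    then have c: "c > 0" using \<epsilon> by (simp add: zero_less_divide_iff zero_less_mult_iff)
    then have "C \<noteq> 0" unfolding c_def by auto
    have "k * x - D \<le> ln (exp (k * a) * c / \<epsilon>)"
      using le c \<epsilon> by (subst ln_exp[symmetric]) (intro ln_mono; simp)
    also have "\<dots> = k * a + ln c - ln \<epsilon>"
      using c \<epsilon> by (simp add: ln_div ln_mult)
    finally have "x \<le> a + (D - ln \<epsilon>) / k + ln c / k"
      using k by (simp add: field_simps)
    then show ?thesis using real False \<open>C \<noteq> 0\<close> k by (simp add: eln_def c_def)
  qed (use real k in \<open>simp add: eln_def\<close>)
qed (use KLe k in \<open>simp_all add: eln_def\<close>)

lemma measurable_pop_risk:
  assumes "prob_space PZ" and "(\<lambda>(w, z). loss w z) \<in> borel_measurable (W \<Otimes>\<^sub>M PZ)"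
  shows "pop_risk loss PZ \<in> borel_measurable W"
  unfolding pop_risk_def
  by (rule sigma_finite_measure.borel_measurable_lebesgue_integral)
    (use assms prob_space_imp_sigma_finite in auto)

lemma measurable_emp_risk:
  fixes loss :: "'w \<Rightarrow> 'z \<Rightarrow> real" and n :: nat
  assumes [measurable]: "(\<lambda>(w, z). loss w z) \<in> borel_measurable (W \<Otimes>\<^sub>M PZ)"
  shows "(\<lambda>(S, w). emp_risk loss n w S) \<in> borel_measurable (PiM {..<n} (\<lambda>_. PZ) \<Otimes>\<^sub>M W)"
  unfolding emp_risk_def by measurable

lemma emp_risk_diff_le:
  fixes n :: nat
  assumes "n > 0" and "\<And>i. i < n \<Longrightarrow> loss w' (S i) - loss w (S i) \<le> b"
  shows "emp_risk loss n w' S - emp_risk loss n w S \<le> b"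
proof -
  have "emp_risk loss n w' S - emp_risk loss n w S \<le> (\<Sum>i<n. b) / n"
    unfolding emp_risk_def diff_divide_distrib[symmetric] sum_subtractf[symmetric]
    using assms(2) by (intro divide_right_mono sum_mono) auto
  then show ?thesis using assms(1) by simp
qed

lemma measurable_exp_risk_gap:
  fixes loss :: "'w \<Rightarrow> 'z \<Rightarrow> real" and n :: nat
  assumes PZ: "prob_space PZ" and loss: "(\<lambda>(w, z). loss w z) \<in> borel_measurable (W \<Otimes>\<^sub>M PZ)"
    and Q_sets: "sets Q = sets (W \<Otimes>\<^sub>M W)"
  shows "(\<lambda>(S, p). ennreal (exp (k * (pop_risk loss PZ (fst p) - emp_risk loss n (snd p) S))))
           \<in> borel_measurable (PiM {..<n} (\<lambda>_. PZ) \<Otimes>\<^sub>M Q)"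
proof -
  note [measurable] = measurable_pop_risk[OF PZ loss] measurable_emp_risk[OF loss]
  show ?thesis
    unfolding measurable_cong_sets[OF sets_pair_measure_cong[OF refl Q_sets] refl] by measurable
qed

lemma sub_gaussian_nn_integral_exp_mean_gap_le:
  fixes X :: "'z \<Rightarrow> real" and n :: nat
  assumes PZ: "prob_space PZ" and X: "sub_gaussian PZ X \<sigma>" and n: "n > 0"
  shows "(\<integral>\<^sup>+S. ennreal (exp (k * ((\<integral>z. X z \<partial>PZ) - (\<Sum>i<n. X (S i)) / n))) \<partial>PiM {..<n} (\<lambda>_. PZ))
           \<le> ennreal (exp (k\<^sup>2 * \<sigma>\<^sup>2 / (2 * n)))"
proof -
  interpret PZ: prob_space PZ by fact
  interpret product_sigma_finite "\<lambda>_::nat. PZ"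
    by (simp add: product_sigma_finite_def PZ.sigma_finite_measure)
  have [measurable]: "X \<in> borel_measurable PZ"
    using X unfolding sub_gaussian_def by auto
  define \<mu> where "\<mu> = (\<integral>z. X z \<partial>PZ)"
  define t where "t = k / n"
  define a where "a = (\<integral>\<^sup>+z. ennreal (exp (t * (\<mu> - X z))) \<partial>PZ)"
  have split: "k * (\<mu> - (\<Sum>i<n. X (S i)) / n) = (\<Sum>i<n. t * (\<mu> - X (S i)))" for S
  proof -
    have "(\<Sum>i<n. t * (\<mu> - X (S i))) = t * (n * \<mu> - (\<Sum>i<n. X (S i)))"
      by (simp add: sum_distrib_left[symmetric] sum_subtractf)
    then show ?thesis using n by (simp add: t_def field_simps)
  qed
  have "(\<integral>\<^sup>+S. ennreal (exp (k * (\<mu> - (\<Sum>i<n. X (S i)) / n))) \<partial>PiM {..<n} (\<lambda>_. PZ)) = a ^ n"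
  proof -
    have "ennreal (exp (\<Sum>i<n. t * (\<mu> - X (S i)))) = (\<Prod>i<n. ennreal (exp (t * (\<mu> - X (S i)))))"
      for S :: "nat \<Rightarrow> 'z"
      by (simp add: exp_sum prod_ennreal)
    then show ?thesis
      unfolding split a_def
      using product_nn_integral_prod[of "{..<n}" "\<lambda>_ z. ennreal (exp (t * (\<mu> - X z)))"] by simp
  qed
  also have "a \<le> ennreal (exp (t\<^sup>2 * \<sigma>\<^sup>2 / 2))"
    using X unfolding sub_gaussian_def a_def \<mu>_def
    by (auto dest!: spec[of _ "- t"] simp: algebra_simps)
  then have "a ^ n \<le> ennreal (exp (t\<^sup>2 * \<sigma>\<^sup>2 / 2)) ^ n" by (rule power_mono) simp
  also have "\<dots> = ennreal (exp (k\<^sup>2 * \<sigma>\<^sup>2 / (2 * n)))"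
    using n by (simp add: ennreal_power exp_of_nat_mult[symmetric] t_def power2_eq_square field_simps)
  finally show ?thesis unfolding \<mu>_def .
qed

lemma nn_integral_exp_risk_gap_le:
  fixes loss :: "'w \<Rightarrow> 'z \<Rightarrow> real" and d :: "'w \<Rightarrow> 'w \<Rightarrow> real" and n :: nat
  assumes PZ: "prob_space PZ" and n: "n > 0" and k: "0 \<le> k"
    and loss: "(\<lambda>(w, z). loss w z) \<in> borel_measurable (W \<Otimes>\<^sub>M PZ)"
    and subgauss: "\<forall>w\<in>space W. sub_gaussian PZ (loss w) \<sigma>"
    and lipschitz: "\<forall>z\<in>space PZ. \<forall>w\<in>space W. \<forall>w'\<in>space W. \<bar>loss w z - loss w' z\<bar> \<le> K * d w w'"
    and d[measurable]: "(\<lambda>p. d (fst p) (snd p)) \<in> borel_measurable (W \<Otimes>\<^sub>M W)"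
    and Q: "prob_space Q" and Q_sets: "sets Q = sets (W \<Otimes>\<^sub>M W)"
  shows "(\<integral>\<^sup>+S. (\<integral>\<^sup>+p. ennreal (exp (k * (pop_risk loss PZ (fst p) - emp_risk loss n (snd p) S))) \<partial>Q)
            \<partial>PiM {..<n} (\<lambda>_. PZ))
         \<le> ennreal (exp (k\<^sup>2 * \<sigma>\<^sup>2 / (2 * n))) * (\<integral>\<^sup>+p. ennreal (exp (k * K * d (fst p) (snd p))) \<partial>Q)"
proof -
  let ?SP = "PiM {..<n} (\<lambda>_. PZ)"
  define gap where "gap w' w S = ennreal (exp (k * (pop_risk loss PZ w' - emp_risk loss n w S)))" for w' w S
  define c where "c = ennreal (exp (k\<^sup>2 * \<sigma>\<^sup>2 / (2 * n)))"
  interpret Q: prob_space Q by fact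
  interpret SP: prob_space ?SP by (rule prob_space_PiM) (simp add: PZ)
  interpret pair_sigma_finite ?SP Q
    by (simp add: pair_sigma_finite_def SP.sigma_finite_measure Q.sigma_finite_measure)
  note [measurable] = measurable_pop_risk[OF PZ loss] measurable_emp_risk[OF loss]
  have gap_meas: "(\<lambda>(S, p). gap (fst p) (snd p) S) \<in> borel_measurable (?SP \<Otimes>\<^sub>M Q)"
    using measurable_exp_risk_gap[OF PZ loss Q_sets] unfolding gap_def by simp
  have shift: "gap w' w S \<le> ennreal (exp (k * K * d w' w)) * gap w' w' S"
    if w: "w \<in> space W" and w': "w' \<in> space W" and S: "S \<in> space ?SP" for w w' S
  proof -
    have "emp_risk loss n w' S - emp_risk loss n w S \<le> K * d w' w"
      using lipschitz w w' S
      by (intro emp_risk_diff_le[OF n]) (auto simp: space_PiM dest!: abs_le_D1)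
    then have "k * (emp_risk loss n w' S - emp_risk loss n w S) \<le> k * K * d w' w"
      using mult_left_mono[OF _ k] by (simp add: mult.assoc)
    then show ?thesis
      unfolding gap_def by (simp add: ennreal_mult''[symmetric] exp_add[symmetric] algebra_simps)
  qed
  have inner: "(\<integral>\<^sup>+S. gap w' w S \<partial>?SP) \<le> ennreal (exp (k * K * d w' w)) * c"
    if w: "w \<in> space W" and w': "w' \<in> space W" for w w'
  proof -
    have "(\<integral>\<^sup>+S. gap w' w S \<partial>?SP) \<le> (\<integral>\<^sup>+S. ennreal (exp (k * K * d w' w)) * gap w' w' S \<partial>?SP)"
      by (rule nn_integral_mono) (rule shift[OF w w'])
    also have "\<dots> = ennreal (exp (k * K * d w' w)) * (\<integral>\<^sup>+S. gap w' w' S \<partial>?SP)"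
      using w' by (intro nn_integral_cmult) (simp add: gap_def)
    also have "(\<integral>\<^sup>+S. gap w' w' S \<partial>?SP) \<le> c"
      using sub_gaussian_nn_integral_exp_mean_gap_le[OF PZ subgauss[rule_format, OF w'] n, of k]
      unfolding gap_def c_def pop_risk_def emp_risk_def .
    finally show ?thesis by (simp add: mult_left_mono)
  qed
  have space_Q: "space Q = space W \<times> space W"
    using sets_eq_imp_space_eq[OF Q_sets] by (simp add: space_pair_measure)
  have "(\<integral>\<^sup>+S. (\<integral>\<^sup>+p. gap (fst p) (snd p) S \<partial>Q) \<partial>?SP) = (\<integral>\<^sup>+p. (\<integral>\<^sup>+S. gap (fst p) (snd p) S \<partial>?SP) \<partial>Q)"
    using Fubini'[OF gap_meas] by simp
  also have "\<dots> \<le> (\<integral>\<^sup>+p. ennreal (exp (k * K * d (fst p) (snd p))) * c \<partial>Q)"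
    by (rule nn_integral_mono) (auto simp: space_Q intro!: inner)
  also have "\<dots> = c * (\<integral>\<^sup>+p. ennreal (exp (k * K * d (fst p) (snd p))) \<partial>Q)"
    by (subst nn_integral_multc) (simp_all add: measurable_cong_sets[OF Q_sets refl] mult.commute)
  finally show ?thesis unfolding gap_def c_def .
qed

lemma train_dist_in_prob_algebra:
  assumes "AS \<in> space (prob_algebra (learn_space L l0 Ml))"
  shows "(train_dist L l0 Ml AS :: ('v, 'd::finite) weights measure)
           \<in> space (prob_algebra (weight_space L l0 Ml))"
proof -
  have AS: "prob_space AS" and AS_sets: "sets AS = sets (learn_space L l0 Ml)"
    using assms by (auto simp: space_prob_algebra)
  have "(\<lambda>f. (f, (mat 1, 0))) \<in> AS \<rightarrow>\<^sub>M (weight_space L l0 Ml :: ('v, 'd) weights measure)"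
    unfolding weight_space_def by (simp add: measurable_cong_sets[OF AS_sets refl])
  then show ?thesis
    unfolding train_dist_def by (simp add: space_prob_algebra prob_space.prob_space_distr[OF AS])
qed

lemma deploy_measurable:
  assumes "ch \<in> borel \<rightarrow>\<^sub>M prob_algebra borel"
  shows "deploy L l0 Ml ch \<in> weight_space L l0 Ml \<rightarrow>\<^sub>M prob_algebra (weight_space L l0 Ml :: ('v, 'd::finite) weights measure)"
proof -
  have "(\<lambda>W. ch (snd W)) \<in> (weight_space L l0 Ml :: ('v, 'd) weights measure) \<rightarrow>\<^sub>M prob_algebra borel"
    using assms unfolding weight_space_def by measurable
  moreover have "(\<lambda>(W, c'). (fst W, c')) \<in> weight_space L l0 Ml \<Otimes>\<^sub>M borel \<rightarrow>\<^sub>M (weight_space L l0 Ml :: ('v, 'd) weights measure)"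
    unfolding weight_space_def by simp
  ultimately show ?thesis
    unfolding deploy_def by (rule measurable_distr_prob_space2)
qed

lemma joint_kernel_measurable:
  assumes "ch \<in> borel \<rightarrow>\<^sub>M prob_algebra borel"
  shows "(\<lambda>W. distr (deploy L l0 Ml ch W) (weight_space L l0 Ml \<Otimes>\<^sub>M weight_space L l0 Ml) (\<lambda>W'. (W', W)))
           \<in> weight_space L l0 Ml
             \<rightarrow>\<^sub>M prob_algebra (weight_space L l0 Ml \<Otimes>\<^sub>M weight_space L l0 Ml :: (('v, 'd::finite) weights \<times> _) measure)"
  by (rule measurable_distr_prob_space2[OF deploy_measurable[OF assms]]) simp

lemma joint_dist_in_prob_algebra:
  assumes "AS \<in> space (prob_algebra (learn_space L l0 Ml))" and "ch \<in> borel \<rightarrow>\<^sub>M prob_algebra borel"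
  shows "(joint_dist L l0 Ml ch AS :: (('v, 'd::finite) weights \<times> _) measure)
           \<in> space (prob_algebra (weight_space L l0 Ml \<Otimes>\<^sub>M weight_space L l0 Ml))"
  using prob_space_bind'[OF train_dist_in_prob_algebra[OF assms(1)] joint_kernel_measurable[OF assms(2)]]
    sets_bind'[OF train_dist_in_prob_algebra[OF assms(1)] joint_kernel_measurable[OF assms(2)]]
  unfolding joint_dist_def by (simp add: space_prob_algebra)

lemma distr_snd_joint_dist:
  assumes AS: "AS \<in> space (prob_algebra (learn_space L l0 Ml))"
    and ch: "ch \<in> borel \<rightarrow>\<^sub>M prob_algebra borel"
  shows "distr (joint_dist L l0 Ml ch AS) (weight_space L l0 Ml) snd
           = (train_dist L l0 Ml AS :: ('v, 'd::finite) weights measure)"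
proof -
  let ?WS = "weight_space L l0 Ml :: ('v, 'd) weights measure"
  let ?T = "train_dist L l0 Ml AS :: ('v, 'd) weights measure"
  have T: "prob_space ?T" and T_sets: "sets ?T = sets ?WS"
    using train_dist_in_prob_algebra[OF AS] by (auto simp: space_prob_algebra)
  have "distr (joint_dist L l0 Ml ch AS) ?WS snd
      = ?T \<bind> (\<lambda>W. distr (distr (deploy L l0 Ml ch W) (?WS \<Otimes>\<^sub>M ?WS) (\<lambda>W'. (W', W))) ?WS snd)"
    unfolding joint_dist_def
    by (rule distr_bind[OF _ prob_space.not_empty[OF T], where K="?WS \<Otimes>\<^sub>M ?WS"])
      (simp_all add: measurable_cong_sets[OF T_sets refl] measurable_prob_algebraD[OF joint_kernel_measurable[OF ch]])
  also have "\<dots> = ?T \<bind> return ?WS"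
  proof (rule bind_cong[OF refl])
    fix W assume "W \<in> space ?T"
    then have W: "W \<in> space ?WS" using sets_eq_imp_space_eq[OF T_sets] by simp
    then have D: "prob_space (deploy L l0 Ml ch W)" and D_sets: "sets (deploy L l0 Ml ch W) = sets ?WS"
      using measurable_space[OF deploy_measurable[OF ch] W] by (auto simp: space_prob_algebra)
    have "(\<lambda>W'. (W', W)) \<in> deploy L l0 Ml ch W \<rightarrow>\<^sub>M ?WS \<Otimes>\<^sub>M ?WS"
      unfolding measurable_cong_sets[OF D_sets refl] using W by simp
    then have "distr (distr (deploy L l0 Ml ch W) (?WS \<Otimes>\<^sub>M ?WS) (\<lambda>W'. (W', W))) ?WS snd
        = distr (deploy L l0 Ml ch W) ?WS (\<lambda>_. W)"
      by (simp add: distr_distr comp_def)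
    also have "\<dots> = return ?WS W" using prob_space.distr_const[OF D W] .
    finally show "distr (distr (deploy L l0 Ml ch W) (?WS \<Otimes>\<^sub>M ?WS) (\<lambda>W'. (W', W))) ?WS snd = return ?WS W" .
  qed
  also have "\<dots> = ?T" by (rule bind_return''[OF T_sets])
  finally show ?thesis .
qed

lemma integral_joint_dist_diff:
  fixes f g :: "('v, 'd::finite) weights \<Rightarrow> real"
  assumes AS: "AS \<in> space (prob_algebra (learn_space L l0 Ml))"
    and ch: "ch \<in> borel \<rightarrow>\<^sub>M prob_algebra borel"
    and f[measurable]: "f \<in> borel_measurable (weight_space L l0 Ml)"
    and g[measurable]: "g \<in> borel_measurable (weight_space L l0 Ml)"
    and f_int: "integrable (deploy_dist L l0 Ml ch AS) f"
    and g_int: "integrable (train_dist L l0 Ml AS) g"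
  shows "integrable (joint_dist L l0 Ml ch AS) (\<lambda>p. f (fst p) - g (snd p))"
    and "(\<integral>p. f (fst p) - g (snd p) \<partial>joint_dist L l0 Ml ch AS)
           = (\<integral>w. f w \<partial>deploy_dist L l0 Ml ch AS) - (\<integral>w. g w \<partial>train_dist L l0 Ml AS)"
proof -
  let ?J = "joint_dist L l0 Ml ch AS"
  have J_sets: "sets ?J = sets (weight_space L l0 Ml \<Otimes>\<^sub>M weight_space L l0 Ml)"
    using joint_dist_in_prob_algebra[OF AS ch] by (simp add: space_prob_algebra)
  have fst: "fst \<in> ?J \<rightarrow>\<^sub>M weight_space L l0 Ml" and snd: "snd \<in> ?J \<rightarrow>\<^sub>M weight_space L l0 Ml"
    by (simp_all add: measurable_cong_sets[OF J_sets refl])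
  have f': "integrable ?J (\<lambda>p. f (fst p))"
    using f_int integrable_distr_eq[OF fst f] unfolding deploy_dist_def by simp
  have g': "integrable ?J (\<lambda>p. g (snd p))"
    using g_int integrable_distr_eq[OF snd g] unfolding distr_snd_joint_dist[OF AS ch, symmetric] by simp
  show "integrable ?J (\<lambda>p. f (fst p) - g (snd p))" using f' g' by auto
  show "(\<integral>p. f (fst p) - g (snd p) \<partial>?J)
          = (\<integral>w. f w \<partial>deploy_dist L l0 Ml ch AS) - (\<integral>w. g w \<partial>train_dist L l0 Ml AS)"
    unfolding deploy_dist_def distr_snd_joint_dist[OF AS ch, symmetric]
    using f' g' by (simp add: integral_distr[OF fst f] integral_distr[OF snd g])
qed

lemma measurable_dW:
  assumes dl: "\<forall>l\<in>learn_idx L l0. case_prod (dl l) \<in> borel_measurable (Ml l \<Otimes>\<^sub>M Ml l)"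
    and dc: "case_prod dc \<in> borel_measurable borel"
  shows "(\<lambda>p. dW L l0 dl dc (fst p) (snd p))
           \<in> borel_measurable (weight_space L l0 Ml \<Otimes>\<^sub>M weight_space L l0 Ml :: (('v, 'd::finite) weights \<times> _) measure)"
proof -
  let ?WS = "weight_space L l0 Ml :: ('v, 'd) weights measure"
  have "(\<lambda>p. dl l (fst (fst p) l) (fst (snd p) l)) \<in> borel_measurable (?WS \<Otimes>\<^sub>M ?WS)"
    if l: "l \<in> learn_idx L l0" for l
  proof -
    have "(\<lambda>p. (fst (fst p) l, fst (snd p) l)) \<in> ?WS \<Otimes>\<^sub>M ?WS \<rightarrow>\<^sub>M Ml l \<Otimes>\<^sub>M Ml l"
      unfolding weight_space_def learn_space_def using l by measurable
    from measurable_compose[OF this dl[rule_format, OF l]] show ?thesis by simp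
  qed
  moreover have "(\<lambda>p. dc (snd (fst p)) (snd (snd p))) \<in> borel_measurable (?WS \<Otimes>\<^sub>M ?WS)"
  proof -
    have "(\<lambda>p. (snd (fst p), snd (snd p))) \<in> ?WS \<Otimes>\<^sub>M ?WS \<rightarrow>\<^sub>M borel \<Otimes>\<^sub>M borel"
      unfolding weight_space_def by measurable
    then have "(\<lambda>p. (snd (fst p), snd (snd p))) \<in> ?WS \<Otimes>\<^sub>M ?WS \<rightarrow>\<^sub>M borel"
      by (simp add: borel_prod)
    from measurable_compose[OF this dc] show ?thesis by simp
  qed
  ultimately show ?thesis
    unfolding dW_def by (intro borel_measurable_add borel_measurable_sum)
qed

lemma exp_gen_error_minus_KL_le:
  fixes loss :: "('v, 'd::finite) weights \<Rightarrow> 'z \<Rightarrow> real" and n :: nat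
  assumes PZ: "prob_space PZ"
    and loss: "(\<lambda>(w, z). loss w z) \<in> borel_measurable (weight_space L l0 Ml \<Otimes>\<^sub>M PZ)"
    and AS: "AS \<in> space (prob_algebra (learn_space L l0 Ml))"
    and ch: "ch \<in> borel \<rightarrow>\<^sub>M prob_algebra borel"
    and S: "S \<in> space (PiM {..<n} (\<lambda>_. PZ))"
    and pop_int: "integrable (deploy_dist L l0 Ml ch AS) (pop_risk loss PZ)"
    and emp_int: "integrable (train_dist L l0 Ml AS) (\<lambda>w. emp_risk loss n w S)"
    and Q: "prob_space Q" and Q_sets: "sets Q = sets (weight_space L l0 Ml \<Otimes>\<^sub>M weight_space L l0 Ml)"
    and KL: "KL (joint_dist L l0 Ml ch AS) Q = ereal D"
  shows "ennreal (exp (k * wireless_gen_error loss PZ n (deploy_dist L l0 Ml ch AS) (train_dist L l0 Ml AS) S - D))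
           \<le> (\<integral>\<^sup>+p. ennreal (exp (k * (pop_risk loss PZ (fst p) - emp_risk loss n (snd p) S))) \<partial>Q)"
proof -
  let ?J = "joint_dist L l0 Ml ch AS"
  note [measurable] = measurable_pop_risk[OF PZ loss]
  have emp[measurable]: "(\<lambda>w. emp_risk loss n w S) \<in> borel_measurable (weight_space L l0 Ml)"
    using measurable_Pair2[OF measurable_emp_risk[OF loss] S] by simp
  have J: "prob_space ?J" and J_sets: "sets ?J = sets Q"
    using joint_dist_in_prob_algebra[OF AS ch] Q_sets by (auto simp: space_prob_algebra)
  have "(\<lambda>p. k * (pop_risk loss PZ (fst p) - emp_risk loss n (snd p) S)) \<in> borel_measurable Q"
    unfolding measurable_cong_sets[OF Q_sets refl] by measurable
  moreover note integral_joint_dist_diff[OF AS ch _ emp pop_int emp_int]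
  ultimately show ?thesis
    using donsker_varadhan[OF J Q J_sets KL, of "\<lambda>p. k * (pop_risk loss PZ (fst p) - emp_risk loss n (snd p) S)"]
    by (simp add: wireless_gen_error_def)
qed

theorem theorem1:
  fixes PZ :: "'z measure" and n L l0 :: nat
    and Ml :: "nat \<Rightarrow> 'v measure" and dl :: "nat \<Rightarrow> 'v \<Rightarrow> 'v \<Rightarrow> real"
    and dc :: "(real^'d^'d) \<times> (real^'d) \<Rightarrow> (real^'d^'d) \<times> (real^'d) \<Rightarrow> real"
    and loss :: "('v, 'd::finite) weights \<Rightarrow> 'z \<Rightarrow> real"
    and A :: "(nat \<Rightarrow> 'z) \<Rightarrow> (nat \<Rightarrow> 'v) measure"
    and ch :: "(real^'d^'d) \<times> (real^'d) \<Rightarrow> ((real^'d^'d) \<times> (real^'d)) measure"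
    and Q :: "(('v, 'd) weights \<times> ('v, 'd) weights) measure"
    and \<sigma> K k \<epsilon> :: real
  assumes PZ: "prob_space PZ"
    and n_pos: "n > 0"
    and l0: "l0 \<in> {1..Suc L}"
    and metrics: "\<forall>l\<in>learn_idx L l0. Metric_space (space (Ml l)) (dl l)"
    and metric_ch: "Metric_space UNIV dc"
    and metrics_meas: "\<forall>l\<in>learn_idx L l0. case_prod (dl l) \<in> borel_measurable (Ml l \<Otimes>\<^sub>M Ml l)"
    and metric_ch_meas: "case_prod dc \<in> borel_measurable borel"
    and loss_meas: "(\<lambda>(w, z). loss w z) \<in> borel_measurable (weight_space L l0 Ml \<Otimes>\<^sub>M PZ)"
    and loss_nonneg: "\<forall>w\<in>space (weight_space L l0 Ml). \<forall>z\<in>space PZ. 0 \<le> loss w z"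
    and subgauss: "\<forall>w\<in>space (weight_space L l0 Ml). sub_gaussian PZ (loss w) \<sigma>"
    and lipschitz: "\<forall>z\<in>space PZ. \<forall>w\<in>space (weight_space L l0 Ml). \<forall>w'\<in>space (weight_space L l0 Ml).
                      \<bar>loss w z - loss w' z\<bar> \<le> K * dW L l0 dl dc w w'"
    and alg: "A \<in> PiM {..<n} (\<lambda>_. PZ) \<rightarrow>\<^sub>M prob_algebra (learn_space L l0 Ml)"
    and channel: "ch \<in> borel \<rightarrow>\<^sub>M prob_algebra borel"
    and well_defined: "\<forall>S\<in>space (PiM {..<n} (\<lambda>_. PZ)).
         integrable (deploy_dist L l0 Ml ch (A S)) (pop_risk loss PZ)
       \<and> integrable (train_dist L l0 Ml (A S)) (\<lambda>w. emp_risk loss n w S)"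
    and Q: "prob_space Q"
    and Q_sets: "sets Q = sets (weight_space L l0 Ml \<Otimes>\<^sub>M weight_space L l0 Ml)"
    and k_pos: "k > 0"
    and eps: "0 < \<epsilon>" "\<epsilon> < 1"
  shows "\<exists>E\<in>sets (PiM {..<n} (\<lambda>_. PZ)).
           measure (PiM {..<n} (\<lambda>_. PZ)) E \<ge> 1 - \<epsilon> \<and>
           (\<forall>S\<in>E.
              ereal (wireless_gen_error loss PZ n (deploy_dist L l0 Ml ch (A S)) (train_dist L l0 Ml (A S)) S)
              \<le> ereal (k * \<sigma>\<^sup>2 / (2 * real n))
                 + (KL (joint_dist L l0 Ml ch (A S)) Q - ereal (ln \<epsilon>)) / ereal k
                 + eln (\<integral>\<^sup>+ p. ennreal (exp (k * K * dW L l0 dl dc (fst p) (snd p))) \<partial>Q) / ereal k)"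
proof -
  let ?SP = "PiM {..<n} (\<lambda>_. PZ)"
  let ?\<Delta> = "\<lambda>S. wireless_gen_error loss PZ n (deploy_dist L l0 Ml ch (A S)) (train_dist L l0 Ml (A S)) S"
  define gap where
    "gap S = (\<integral>\<^sup>+p. ennreal (exp (k * (pop_risk loss PZ (fst p) - emp_risk loss n (snd p) S))) \<partial>Q)" for S
  define mgf where "mgf = (\<integral>\<^sup>+p. ennreal (exp (k * K * dW L l0 dl dc (fst p) (snd p))) \<partial>Q)"
  define c where "c = ennreal (exp (k * (k * \<sigma>\<^sup>2 / (2 * real n)))) * mgf"
  interpret Q: prob_space Q by fact
  interpret SP: prob_space ?SP by (rule prob_space_PiM) (simp add: PZ)
  note dW_meas = measurable_dW[OF metrics_meas metric_ch_meas]
  have "(\<integral>\<^sup>+S. gap S \<partial>?SP) \<le> c"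
    using nn_integral_exp_risk_gap_le[OF PZ n_pos _ loss_meas subgauss lipschitz dW_meas Q Q_sets] k_pos
    by (simp add: gap_def mgf_def c_def power2_eq_square mult.assoc)
  moreover have "gap \<in> borel_measurable ?SP"
    unfolding gap_def by (rule Q.borel_measurable_nn_integral)
      (use measurable_exp_risk_gap[OF PZ loss_meas Q_sets] in simp)
  moreover have "c \<noteq> 0"
    using Q.nn_integral_exp_neq_0 dW_meas by (simp add: c_def mgf_def measurable_cong_sets[OF Q_sets refl])
  ultimately obtain E where E: "E \<in> sets ?SP" "1 - \<epsilon> \<le> measure ?SP E"
    and gap_E: "\<forall>S\<in>E. gap S \<le> c / ennreal \<epsilon>"
    using SP.nn_integral_Markov_high_probability eps(1) by blast
  have bound: "ennreal (exp (k * ?\<Delta> S - D)) \<le> c / ennreal \<epsilon>"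
    if SE: "S \<in> E" and KL: "KL (joint_dist L l0 Ml ch (A S)) Q = ereal D" for S D
  proof -
    have S: "S \<in> space ?SP" using sets.sets_into_space[OF E(1)] SE by blast
    note AS = measurable_space[OF alg S]
    have "ennreal (exp (k * ?\<Delta> S - D)) \<le> gap S"
      using exp_gen_error_minus_KL_le[OF PZ loss_meas AS channel S _ _ Q Q_sets KL] well_defined S
      unfolding gap_def by blast
    with gap_E SE show ?thesis by (blast intro: order_trans)
  qed
  show ?thesis
    using E bound k_pos eps(1)
    by (intro bexI[OF _ E(1)] conjI ballI ereal_le_of_exp_bound) (auto simp: KL_def c_def mgf_def)
qed

end
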